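(* Let $N$ be a positive-integer-valued random variable with probability generating function $Q$ (so $Q$ is a continuous strictly increasing bijection of $[0,1]$ onto itself, with inverse $Q^{-1}$). (i) If $Q$ satisfies $$1-Q(1-s)=Q^{-1}(s)\quad\text{for all }0<s<1,$$ then for every continuous d.f. $F$ on $\mathbb{R}$, every $a\in\mathbb{R}$ and $b>0$: $Q[F(x)]=F(a+bx)$ for all $x$ holds if and only if $Q[\bar F(a+bx)]=\bar F(x)$ for all $x$. That is, $N$-max stability of $F$ is equivalent to $N$-min stability of $F$ (with the same constants). (ii) Conversely, if there is a continuous d.f. $F$ on $\mathbb{R}$ with $\{F(x):x\in\mathbb{R}\}\supseteq(0,1)$ and constants $a\in\mathbb{R}$, $b>0$ such that both $Q[F(x)]=F(a+bx)$ and $Q[\bar F(a+bx)]=\bar F(x)$ hold for all $x\in\mathbb{R}$, then $1-Q(1-s)=Q^{-1}(s)$ for all $0<s<1$.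
   Context: For a continuous d.f. $F$ on $\mathbb{R}$ and a positive-integer-valued random variable $N$ with PGF $Q$, $F$ is called $N$-max stable if $Q[F(x)]=F(a+bx)$ for all $x\in\mathbb{R}$ and some $a\in\mathbb{R}$, $b>0$, and $N$-min stable if $Q[\bar F(a+bx)]=\bar F(x)$ for all $x\in\mathbb{R}$ and some $a\in\mathbb{R}$, $b>0$, where $\bar F=1-F$. *)

theory Defs
  imports "HOL-Probability.Probability"
begin

definition pgf :: "nat pmf \<Rightarrow> real \<Rightarrow> real" where
  "pgf N s = (\<Sum>k. pmf N k * s ^ k)"

definition pgf_inv :: "nat pmf \<Rightarrow> real \<Rightarrow> real" where
  "pgf_inv N = the_inv_into {0..1} (pgf N)"

definition cont_df :: "(real \<Rightarrow> real) \<Rightarrow> bool" where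
  "cont_df F \<longleftrightarrow> mono F \<and> continuous_on UNIV F \<and>
     (F \<longlongrightarrow> 0) at_bot \<and> (F \<longlongrightarrow> 1) at_top"

end

theory Submission
  imports Defs
begin

text \<open>Write \<open>Q = pgf N\<close>. Since \<open>N \<ge> 1\<close>, \<open>Q\<close> is strictly increasing on \<open>[0,1]\<close> with
  \<open>Q 0 = 0\<close> and \<open>Q 1 = 1\<close>, and the condition \<open>1 - Q (1 - s) = Q\<^sup>-\<^sup>1 s\<close> says exactly that
  \<open>Q (1 - Q u) = 1 - u\<close> on \<open>[0,1]\<close>. For an injective self-map of \<open>[0,1]\<close> this makes its graph
  symmetric under the reflection \<open>(u, v) \<mapsto> (1 - v, 1 - u)\<close>. Max stability is the statement
  that \<open>(F x, F (a + b x))\<close> lies on the graph of \<open>Q\<close>, min stability that its reflection does,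
  so (i) holds pointwise in \<open>x\<close>. For (ii), every \<open>s \<in> (0,1)\<close> is a value \<open>F (a + b x)\<close>, and the two
  stability equations at that \<open>x\<close> give \<open>Q\<^sup>-\<^sup>1 s = F x = 1 - Q (1 - s)\<close>.\<close>

lemma pmf_sums_one: "pmf N sums 1"
  using sums_infsetsum_nat'[OF pmf_abs_summable[of N UNIV]] infsetsum_pmf_eq_1[of N UNIV]
  by simp

lemma summable_pgf:
  assumes "s \<in> {0..1}"
  shows "summable (\<lambda>k. pmf N k * s ^ k)"
proof (rule summable_comparison_test'[where g = "pmf N"])
  show "summable (pmf N)"
    using pmf_sums_one sums_summable by blast
  show "norm (pmf N k * s ^ k) \<le> pmf N k" for k
    using assms by (simp add: abs_mult mult_left_le power_le_one)
qed

lemma pgf_1: "pgf N 1 = 1"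
  using pmf_sums_one unfolding pgf_def by (simp add: sums_iff)

lemma pgf_0:
  assumes "pmf N 0 = 0"
  shows "pgf N 0 = 0"
proof -
  have "(\<lambda>k. pmf N k * (0::real) ^ k) = (\<lambda>k. 0)"
    using assms by (auto simp: power_0_left)
  then show ?thesis
    unfolding pgf_def by simp
qed

lemma pgf_strict_mono_on:
  assumes "pmf N 0 = 0"
  shows "strict_mono_on {0..1} (pgf N)"
proof (rule strict_mono_onI)
  fix s t :: real
  assume s: "s \<in> {0..1}" and t: "t \<in> {0..1}" and "s < t"
  obtain k where "k \<in> set_pmf N"
    using set_pmf_not_empty[of N] by blast
  then have k_pos: "0 < pmf N k"
    by (simp add: pmf_positive)
  with assms have "k \<noteq> 0"
    by (metis less_irrefl)
  define d where "d k = pmf N k * t ^ k - pmf N k * s ^ k" for k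
  have "summable d"
    unfolding d_def using summable_pgf[OF s] summable_pgf[OF t] by (rule summable_diff[rotated])
  moreover have "0 \<le> d n" for n
    unfolding d_def using s \<open>s < t\<close>
    by (simp add: right_diff_distrib[symmetric] power_mono)
  moreover have "0 < d k"
    unfolding d_def using s \<open>s < t\<close> \<open>k \<noteq> 0\<close> k_pos
    by (simp add: right_diff_distrib[symmetric] power_strict_mono)
  ultimately have "0 < suminf d"
    using suminf_pos_iff by blast
  also have "suminf d = pgf N t - pgf N s"
    unfolding d_def pgf_def using suminf_diff[OF summable_pgf[OF t] summable_pgf[OF s]] by simp
  finally show "pgf N s < pgf N t"
    by simp
qed

lemma pgf_mem_unit_interval:
  assumes "pmf N 0 = 0" and "s \<in> {0..1}"
  shows "pgf N s \<in> {0..1}"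
  using strict_mono_on_leD[OF pgf_strict_mono_on[OF assms(1)], of 0 s]
    strict_mono_on_leD[OF pgf_strict_mono_on[OF assms(1)], of s 1] assms
  by (simp add: pgf_0 pgf_1)

lemma pgf_inv_pgf:
  assumes "pmf N 0 = 0" and "t \<in> {0..1}"
  shows "pgf_inv N (pgf N t) = t"
  unfolding pgf_inv_def
  using the_inv_into_f_f[OF strict_mono_on_imp_inj_on[OF pgf_strict_mono_on[OF assms(1)]] assms(2)] .

lemma cont_df_mem_unit_interval:
  assumes "cont_df F"
  shows "F x \<in> {0..1}"
proof -
  have mono: "mono F" and lim_bot: "(F \<longlongrightarrow> 0) at_bot" and lim_top: "(F \<longlongrightarrow> 1) at_top"
    using assms unfolding cont_df_def by auto
  have "0 \<le> F x"
    by (rule tendsto_upperbound[OF lim_bot])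
      (use mono in \<open>auto simp: eventually_at_bot_linorder mono_def\<close>)
  moreover have "F x \<le> 1"
    by (rule tendsto_lowerbound[OF lim_top])
      (use mono in \<open>auto simp: eventually_at_top_linorder mono_def\<close>)
  ultimately show ?thesis
    by simp
qed

lemma graph_reflection_iff:
  fixes f :: "real \<Rightarrow> real"
  assumes inj: "inj_on f {0..1}" and maps: "f ` {0..1} \<subseteq> {0..1}"
    and dual: "\<And>u. u \<in> {0..1} \<Longrightarrow> f (1 - f u) = 1 - u"
    and u: "u \<in> {0..1}" and v: "v \<in> {0..1}"
  shows "f u = v \<longleftrightarrow> f (1 - v) = 1 - u"
proof
  assume "f (1 - v) = 1 - u"
  then have "f (1 - f u) = f (1 - v)"
    using dual[OF u] by simp
  moreover have "1 - f u \<in> {0..1}"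
    using maps u by (auto simp: image_subset_iff)
  ultimately show "f u = v"
    using inj_onD[OF inj] v by fastforce
qed (use dual[OF u] in blast)

lemma pgf_dual_identity:
  assumes pos: "pmf N 0 = 0"
    and dual: "\<forall>s\<in>{0<..<1}. 1 - pgf N (1 - s) = pgf_inv N s"
    and u: "u \<in> {0..1}"
  shows "pgf N (1 - pgf N u) = 1 - u"
proof (cases "u \<in> {0<..<1}")
  case True
  then have "pgf N u \<in> {0<..<1}"
    using strict_mono_onD[OF pgf_strict_mono_on[OF pos], of 0 u]
      strict_mono_onD[OF pgf_strict_mono_on[OF pos], of u 1]
    by (simp add: pgf_0[OF pos] pgf_1)
  then have "1 - pgf N (1 - pgf N u) = u"
    using dual pgf_inv_pgf[OF pos u] by metis
  then show ?thesis
    by simp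
next
  case False
  with u have "u = 0 \<or> u = 1"
    by auto
  then show ?thesis
    by (auto simp: pgf_0[OF pos] pgf_1)
qed

lemma max_stable_iff_min_stable:
  assumes pos: "pmf N 0 = 0"
    and dual: "\<forall>s\<in>{0<..<1}. 1 - pgf N (1 - s) = pgf_inv N s"
    and F: "cont_df F"
  shows "pgf N (F x) = F (a + b * x) \<longleftrightarrow> pgf N (1 - F (a + b * x)) = 1 - F x"
  by (rule graph_reflection_iff)
    (use pgf_dual_identity[OF pos dual] pgf_mem_unit_interval[OF pos]
      cont_df_mem_unit_interval[OF F] strict_mono_on_imp_inj_on[OF pgf_strict_mono_on[OF pos]]
     in auto)

lemma dual_identity_if_max_min_stable:
  assumes pos: "pmf N 0 = 0"
    and F: "cont_df F" "{0<..<1} \<subseteq> range F" "b > 0"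
    and max_stable: "\<forall>x. pgf N (F x) = F (a + b * x)"
    and min_stable: "\<forall>x. pgf N (1 - F (a + b * x)) = 1 - F x"
    and s: "s \<in> {0<..<1}"
  shows "1 - pgf N (1 - s) = pgf_inv N s"
proof -
  obtain y where "F y = s"
    using F(2) s by blast
  define x where "x = (y - a) / b"
  have x: "F (a + b * x) = s"
    using \<open>F y = s\<close> \<open>b > 0\<close> by (simp add: x_def)
  have "pgf_inv N s = F x"
    using max_stable x pgf_inv_pgf[OF pos cont_df_mem_unit_interval[OF F(1)]] by metis
  moreover have "pgf N (1 - s) = 1 - F x"
    using min_stable x by metis
  ultimately show ?thesis
    by simp
qed

theorem theorem2p2:
  fixes N :: "nat pmf"
  assumes pos: "pmf N 0 = 0"
  shows "((\<forall>s\<in>{0<..<1}. 1 - pgf N (1 - s) = pgf_inv N s) \<longrightarrow>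
           (\<forall>F a b. cont_df F \<and> b > 0 \<longrightarrow>
              ((\<forall>x. pgf N (F x) = F (a + b * x)) \<longleftrightarrow>
               (\<forall>x. pgf N (1 - F (a + b * x)) = 1 - F x))))
       \<and> ((\<exists>F a b. cont_df F \<and> {0<..<1} \<subseteq> range F \<and> b > 0 \<and>
              (\<forall>x. pgf N (F x) = F (a + b * x)) \<and>
              (\<forall>x. pgf N (1 - F (a + b * x)) = 1 - F x)) \<longrightarrow>
           (\<forall>s\<in>{0<..<1}. 1 - pgf N (1 - s) = pgf_inv N s))"
proof (intro conjI impI allI)
  fix F and a b :: real
  assume "\<forall>s\<in>{0<..<1}. 1 - pgf N (1 - s) = pgf_inv N s" and "cont_df F \<and> b > 0"
  then show "(\<forall>x. pgf N (F x) = F (a + b * x)) \<longleftrightarrow>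
      (\<forall>x. pgf N (1 - F (a + b * x)) = 1 - F x)"
    using max_stable_iff_min_stable[OF pos] by blast
next
  assume "\<exists>F a b. cont_df F \<and> {0<..<1} \<subseteq> range F \<and> b > 0 \<and>
      (\<forall>x. pgf N (F x) = F (a + b * x)) \<and> (\<forall>x. pgf N (1 - F (a + b * x)) = 1 - F x)"
  then show "\<forall>s\<in>{0<..<1}. 1 - pgf N (1 - s) = pgf_inv N s"
    using dual_identity_if_max_min_stable[OF pos] by blast
qed

end
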